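(* Let $S$ be a finite colored ordered set and let $(\sigma,v)\preceq(\pi,w)$ in $\mathcal Y(S)$. Write $\pi=(C_1,\dots,C_q)$, $w=w(1)\cdots w(q)$, and let $v_k$ be the restriction of the coloring $v$ to the blocks of $\sigma$ contained in $C_k$. Then there is an order isomorphism \[ \theta:[\sigma,\pi]\to Y_{v_1}^{w(1)}\times\cdots\times Y_{v_q}^{w(q)} \] (product order on the right) such that for each $\lambda\in[\sigma,\pi]$, $\lambda$ and $\theta(\lambda)=(\lambda_1,\dots,\lambda_q)$ are isomorphic colored ordered sets.
   Context: Fix a finite set of colors $\Gamma$. A colored ordered set is a finite linearly ordered set $S=(x_1<\dots<x_p)$ with a map $c_S:S\to\Gamma$, identified with the word $c_S(x_1)\cdots c_S(x_p)$; two are isomorphic if the (unique) order isomorphism between them preserves colors, i.e. they have the same color word. An (interval) partition of $S$ is a partition into nonempty blocks $B_1<\dots<B_q$ each of which is a set of consecutive elements. A colored partition $(\sigma,c_\sigma)$ of $S$ is an interval partition $\sigma=(B_1,\dots,B_q)$ together with a coloring $c_\sigma$ of its blocks such that every singleton block $\{x\}$ has color $c_S(x)$; it is regarded as the colored ordered set $(B_1<\dots<B_q)$ with coloring $c_\sigma$. $\mathcal Y(S)$ is the set of colored partitions of $S$, partially ordered by $(\sigma,v)\preceq(\pi,w)$ iff every block of $\sigma$ is contained in a block of $\pi$ and every block common to $\sigma$ and $\pi$ has the same color in both. $[\sigma,\pi]=\{\lambda:\sigma\preceq\lambda\preceq\pi\}$. For a word $v$ of length $p$ over $\Gamma$ and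 $j\in\Gamma$, consider $\mathcal Y(([p],v))$; let $\mathbf 0_v$ be the partition into singletons (colored by $v$) and $\mathbf 1_j$ the one-block partition colored $j$; $Y_v^j=[\mathbf 0_v,\mathbf 1_j]$. An element $\lambda_k\in Y_{v_k}^{w(k)}$ is a colored partition of the blocks of $\sigma$ inside $C_k$; $(\lambda_1,\dots,\lambda_q)$ is regarded as the colored ordered set obtained by concatenating the blocks of $\lambda_1,\dots,\lambda_q$ with their colors. *)

theory Defs
  imports Main
begin

text \<open>A colored ordered set is a finite set S of a linearly ordered type with a
coloring c. A colored (interval) partition is a list of blocks with colors
(B_1,c_1),...,(B_q,c_q), listed in increasing order; the blocks are nonempty,
consist of consecutive elements and cover S (all encoded by requiring that the
concatenation of the sorted blocks is the sorted list of S); singleton blocks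
carry the color of their element.\<close>

definition colored_partitions ::
  "'a::linorder set \<Rightarrow> ('a \<Rightarrow> 'c) \<Rightarrow> ('a set \<times> 'c) list set" where
  "colored_partitions S c =
     {P. (\<forall>(B, col) \<in> set P. finite B \<and> B \<noteq> {}) \<and>
         concat (map (\<lambda>(B, col). sorted_list_of_set B) P) = sorted_list_of_set S \<and>
         (\<forall>x col. (({x}, col) \<in> set P) \<longrightarrow> col = c x)}"

definition cprec :: "('a set \<times> 'c) list \<Rightarrow> ('a set \<times> 'c) list \<Rightarrow> bool" where
  "cprec P Q \<longleftrightarrow>
     (\<forall>(B, b) \<in> set P. \<exists>(C, d) \<in> set Q. B \<subseteq> C) \<and>
     (\<forall>B b d. (B, b) \<in> set P \<longrightarrow> (B, d) \<in> set Q \<longrightarrow> b = d)"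

definition cinterval ::
  "'a::linorder set \<Rightarrow> ('a \<Rightarrow> 'c) \<Rightarrow> ('a set \<times> 'c) list \<Rightarrow> ('a set \<times> 'c) list
     \<Rightarrow> ('a set \<times> 'c) list set" where
  "cinterval S c \<sigma> \<pi> = {L \<in> colored_partitions S c. cprec \<sigma> L \<and> cprec L \<pi>}"

definition cword :: "('a set \<times> 'c) list \<Rightarrow> 'c list" where
  "cword P = map snd P"

text \<open>For a word v of length p: 0_v, 1_j and Y_v^j = [0_v, 1_j] in Y(([p], v)),
with [p] = {0..<p}.\<close>
definition zero_part :: "'c list \<Rightarrow> (nat set \<times> 'c) list" where
  "zero_part v = map (\<lambda>i. ({i}, v ! i)) [0..<length v]"

definition one_part :: "'c list \<Rightarrow> 'c \<Rightarrow> (nat set \<times> 'c) list" where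
  "one_part v j = [({0..<length v}, j)]"

definition Yint :: "'c list \<Rightarrow> 'c \<Rightarrow> (nat set \<times> 'c) list set" where
  "Yint v j = cinterval {0..<length v} (\<lambda>i. v ! i) (zero_part v) (one_part v j)"

definition restr_word :: "('a set \<times> 'c) list \<Rightarrow> 'a set \<Rightarrow> 'c list" where
  "restr_word \<sigma> C = map snd (filter (\<lambda>(B, b). B \<subseteq> C) \<sigma>)"

definition Yprod :: "('a set \<times> 'c) list \<Rightarrow> ('a set \<times> 'c) list \<Rightarrow> (nat set \<times> 'c) list list set" where
  "Yprod \<sigma> \<pi> = {ls. length ls = length \<pi> \<and>
      (\<forall>k < length \<pi>. ls ! k \<in> Yint (restr_word \<sigma> (fst (\<pi> ! k))) (snd (\<pi> ! k)))}"

end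

theory Submission
  imports Defs
begin

(*
  An element L of the interval [\<sigma>, \<pi>] is determined by its restrictions L_k to the blocks C_k
  of \<pi>, and these can be chosen independently: L_k ranges over the interval between the
  restriction \<sigma>_k of \<sigma> to C_k and the one-block partition (C_k, w(k)), and L is the
  concatenation of L_1, ..., L_q.  Numbering the blocks of \<sigma>_k as 0, ..., p - 1 and replacing
  every block of L_k by the set of indices of the blocks of \<sigma>_k it contains identifies that
  interval with Y_{v_k}^{w(k)}; the inverse replaces a set of indices by the union of the
  corresponding blocks.  All these maps are monotone in both directions and keep the sequence of
  block colors; the condition on the colors of singleton blocks holds automatically above \<sigma>.
*)

lemma sorted_wrt_concat:
  "sorted_wrt R (concat xss) \<longleftrightarrow> (\<forall>xs\<in>set xss. sorted_wrt R xs) \<and>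
     sorted_wrt (\<lambda>xs ys. \<forall>x\<in>set xs. \<forall>y\<in>set ys. R x y) xss"
  by (induction xss) (auto simp: sorted_wrt_append)

lemma sorted_wrt_cong:
  assumes "\<And>x y. x \<in> set xs \<Longrightarrow> y \<in> set xs \<Longrightarrow> P x y \<longleftrightarrow> Q x y"
  shows "sorted_wrt P xs \<longleftrightarrow> sorted_wrt Q xs"
  using assms by (induction xs) auto

lemma sorted_wrt_asym_set_unique:
  assumes "sorted_wrt R xs" "sorted_wrt R ys" "set xs = set ys"
    and "\<And>x y. x \<in> set xs \<Longrightarrow> y \<in> set xs \<Longrightarrow> R x y \<Longrightarrow> \<not> R y x"
  shows "xs = ys"
  using assms
proof (induction xs arbitrary: ys)
  case Nil
  then show ?case by (metis set_empty)
next
  case (Cons x xs)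
  from Cons.prems(3) obtain y ys' where ys: "ys = y # ys'"
    by (cases ys) auto
  have "x = y"
  proof (rule ccontr)
    assume "x \<noteq> y"
    then have "R x y" "R y x"
      using Cons.prems(1-3) ys by (metis list.set_intros set_ConsD sorted_wrt.simps(2))+
    moreover have "y \<in> set (x # xs)"
      using Cons.prems(3) ys by simp
    ultimately show False
      using Cons.prems(4)[of x y] by simp
  qed
  have irrefl: "\<not> R z z" if "z \<in> set (x # xs)" for z
    using Cons.prems(4) that by blast
  have "x \<notin> set xs" "y \<notin> set ys'"
    using Cons.prems(1,2) ys \<open>x = y\<close> irrefl by auto
  then have "set xs = set ys'"
    using Cons.prems(3) ys \<open>x = y\<close> by (metis Diff_insert_absorb list.simps(15))
  moreover have "sorted_wrt R xs" "sorted_wrt R ys'"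
    using Cons.prems(1,2) ys by simp_all
  moreover have "\<not> R b a" if "a \<in> set xs" "b \<in> set xs" "R a b" for a b
    using Cons.prems(4)[of a b] that by simp
  ultimately have "xs = ys'"
    using Cons.IH by blast
  then show ?case
    using ys \<open>x = y\<close> by simp
qed

definition list_product :: "(nat \<Rightarrow> 'a set) \<Rightarrow> nat \<Rightarrow> 'a list set" where
  "list_product A n = {xs. length xs = n \<and> (\<forall>k<n. xs ! k \<in> A k)}"

lemma bij_betw_list_product:
  assumes bij: "\<And>k. k < n \<Longrightarrow> bij_betw (f k) (A k) (B k)"
  shows "bij_betw (\<lambda>xs. map (\<lambda>k. f k (xs ! k)) [0..<n]) (list_product A n) (list_product B n)"
proof -
  let ?F = "\<lambda>xs. map (\<lambda>k. f k (xs ! k)) [0..<n]"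
  let ?G = "\<lambda>ys. map (\<lambda>k. inv_into (A k) (f k) (ys ! k)) [0..<n]"
  show ?thesis
  proof (rule bij_betw_byWitness[where f' = ?G]; intro ballI subsetI)
    fix xs
    assume "xs \<in> list_product A n"
    then show "?G (?F xs) = xs"
      by (intro nth_equalityI) (auto simp: list_product_def bij_betw_inv_into_left[OF bij])
  next
    fix ys
    assume "ys \<in> list_product B n"
    then show "?F (?G ys) = ys"
      by (intro nth_equalityI) (auto simp: list_product_def bij_betw_inv_into_right[OF bij])
  next
    fix xs
    assume "xs \<in> ?F ` list_product A n"
    then show "xs \<in> list_product B n"
      using bij_betwE[OF bij] by (auto simp: list_product_def)
  next
    fix xs
    assume "xs \<in> ?G ` list_product B n"
    then show "xs \<in> list_product A n"
      using bij_betwE[OF bij_betw_inv_into[OF bij]] by (auto simp: list_product_def)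
  qed
qed

lemma list_all2_map_nth_iff:
  assumes "xs \<in> list_product A n" "ys \<in> list_product A n"
    and "\<And>k x y. k < n \<Longrightarrow> x \<in> A k \<Longrightarrow> y \<in> A k \<Longrightarrow> R' (f k x) (f k y) \<longleftrightarrow> R x y"
  shows "list_all2 R' (map (\<lambda>k. f k (xs ! k)) [0..<n]) (map (\<lambda>k. f k (ys ! k)) [0..<n]) \<longleftrightarrow>
    list_all2 R xs ys"
  using assms by (simp add: list_all2_conv_all_nth list_product_def)

section \<open>Colored partitions as ordered lists of blocks\<close>

definition block_less :: "'a::linorder set \<times> 'c \<Rightarrow> 'a set \<times> 'c \<Rightarrow> bool" where
  "block_less p q \<longleftrightarrow> (\<forall>x\<in>fst p. \<forall>y\<in>fst q. x < y)"

definition ordered_partition :: "'a::linorder set \<Rightarrow> ('a set \<times> 'c) list \<Rightarrow> bool" where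
  "ordered_partition S P \<longleftrightarrow>
     (\<forall>p\<in>set P. finite (fst p) \<and> fst p \<noteq> {}) \<and> \<Union>(fst ` set P) = S \<and> sorted_wrt block_less P"

definition singletons_colored :: "('a \<Rightarrow> 'c) \<Rightarrow> ('a set \<times> 'c) list \<Rightarrow> bool" where
  "singletons_colored c P \<longleftrightarrow> (\<forall>x col. ({x}, col) \<in> set P \<longrightarrow> col = c x)"

lemma colored_partitions_iff:
  assumes "finite S"
  shows "P \<in> colored_partitions S c \<longleftrightarrow> ordered_partition S P \<and> singletons_colored c P"
proof -
  let ?xss = "map (\<lambda>p. sorted_list_of_set (fst p)) P"
  have concat_eq: "concat (map (\<lambda>(B, col). sorted_list_of_set B) P) = concat ?xss"
    by (simp add: case_prod_unfold)
  let ?R = "\<lambda>p q. \<forall>x\<in>set (sorted_list_of_set (fst p)). \<forall>y\<in>set (sorted_list_of_set (fst q)). x < y"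
  have sorted_iff: "sorted_wrt (<) (concat ?xss) \<longleftrightarrow> sorted_wrt block_less P"
    if fin: "\<forall>p\<in>set P. finite (fst p) \<and> fst p \<noteq> {}"
  proof -
    have "sorted_wrt (<) (concat ?xss) \<longleftrightarrow> sorted_wrt ?R P"
      by (simp add: sorted_wrt_concat sorted_wrt_map)
    also have "\<dots> \<longleftrightarrow> sorted_wrt block_less P"
      using fin by (intro sorted_wrt_cong) (simp add: block_less_def)
    finally show ?thesis .
  qed
  show ?thesis
  proof
    assume "P \<in> colored_partitions S c"
    then have fin: "\<forall>p\<in>set P. finite (fst p) \<and> fst p \<noteq> {}"
      and eq: "concat ?xss = sorted_list_of_set S" and "singletons_colored c P"
      by (auto simp: colored_partitions_def singletons_colored_def concat_eq case_prod_beta)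
    moreover have "\<Union>(fst ` set P) = S"
      using arg_cong[OF eq, of set] fin assms by auto
    ultimately show "ordered_partition S P \<and> singletons_colored c P"
      using sorted_iff eq by (simp add: ordered_partition_def)
  next
    assume "ordered_partition S P \<and> singletons_colored c P"
    then have fin: "\<forall>p\<in>set P. finite (fst p) \<and> fst p \<noteq> {}" and "\<Union>(fst ` set P) = S"
      and "sorted_wrt block_less P" and "singletons_colored c P"
      by (auto simp: ordered_partition_def)
    moreover have "concat ?xss = sorted_list_of_set S"
      using assms calculation sorted_iff by (intro strict_sorted_equal) auto
    ultimately show "P \<in> colored_partitions S c"
      by (auto simp: colored_partitions_def singletons_colored_def concat_eq case_prod_beta)
  qed
qed

lemma ordered_partitionD:
  assumes "ordered_partition S P" "p \<in> set P"
  shows "fst p \<noteq> {}" "fst p \<subseteq> S" "finite (fst p)"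
  using assms by (auto simp: ordered_partition_def)

lemma ordered_partition_cover:
  assumes "ordered_partition S P" "x \<in> S"
  obtains p where "p \<in> set P" "x \<in> fst p"
  using assms by (auto simp: ordered_partition_def)

lemma ordered_partition_nth_less:
  assumes "ordered_partition S P" "i < j" "j < length P" "x \<in> fst (P ! i)" "y \<in> fst (P ! j)"
  shows "x < y"
  using assms sorted_wrt_nth_less unfolding ordered_partition_def block_less_def by blast

lemma ordered_partition_nth_eq:
  assumes "ordered_partition S P" "i < length P" "j < length P" "x \<in> fst (P ! i)" "x \<in> fst (P ! j)"
  shows "i = j"
  using ordered_partition_nth_less[OF assms(1), of i j x x] ordered_partition_nth_less[OF assms(1), of j i x x]
    assms by (cases i j rule: linorder_cases) auto

lemma ordered_partition_block_eq:
  assumes "ordered_partition S P" "p \<in> set P" "q \<in> set P" "x \<in> fst p" "x \<in> fst q"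
  shows "p = q"
  using assms ordered_partition_nth_eq[OF assms(1)] by (metis in_set_conv_nth)

lemma block_less_asym:
  assumes "fst p \<noteq> {}" "fst q \<noteq> {}" "block_less p q"
  shows "\<not> block_less q p"
  using assms by (fastforce simp: block_less_def)

lemma sorted_block_lists_eq:
  assumes "sorted_wrt block_less P" "sorted_wrt block_less Q" "set P = set Q"
    and "\<forall>p\<in>set P. fst p \<noteq> {}"
  shows "P = Q"
  by (rule sorted_wrt_asym_set_unique[OF assms(1-3)]) (use assms(4) block_less_asym in blast)

lemma cprec_iff:
  "cprec P Q \<longleftrightarrow> (\<forall>p\<in>set P. \<exists>q\<in>set Q. fst p \<subseteq> fst q) \<and>
     (\<forall>p\<in>set P. \<forall>q\<in>set Q. fst p = fst q \<longrightarrow> snd p = snd q)"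
  unfolding cprec_def by (auto simp: case_prod_beta)

lemma singletons_colored_if_cprec:
  assumes P: "ordered_partition S P" and Q: "ordered_partition S Q"
    and "singletons_colored c P" "cprec P Q"
  shows "singletons_colored c Q"
  unfolding singletons_colored_def
proof (intro allI impI)
  fix x col
  assume x: "({x}, col) \<in> set Q"
  then obtain p where p: "p \<in> set P" "x \<in> fst p"
    using ordered_partitionD(2)[OF Q x] ordered_partition_cover[OF P] by auto
  then obtain q where q: "q \<in> set Q" "fst p \<subseteq> fst q"
    using \<open>cprec P Q\<close> by (auto simp: cprec_iff)
  have "q = ({x}, col)"
    using ordered_partition_block_eq[OF Q q(1) x] p q by auto
  then have "fst p = {x}"
    using ordered_partitionD(1)[OF P p(1)] q(2) by auto
  then have "({x}, snd p) \<in> set P"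
    using p(1) by (metis prod.collapse)
  then show "col = c x"
    using x \<open>cprec P Q\<close> \<open>singletons_colored c P\<close>
    unfolding cprec_iff singletons_colored_def by (metis fst_conv snd_conv)
qed

lemma cinterval_eq:
  assumes "finite S" "\<sigma> \<in> colored_partitions S c"
  shows "cinterval S c \<sigma> \<pi> = {L. ordered_partition S L \<and> cprec \<sigma> L \<and> cprec L \<pi>}"
proof -
  have "singletons_colored c L" if "ordered_partition S L" "cprec \<sigma> L" for L
    using singletons_colored_if_cprec[OF _ that(1) _ that(2)] assms by (simp add: colored_partitions_iff)
  then show ?thesis
    using assms(1) by (auto simp: cinterval_def colored_partitions_iff)
qed

section \<open>The interval between a partition and a one-block partition\<close>

lemma cprec_map_apfst_iff:
  assumes "\<And>D D'. D \<in> \<D> \<Longrightarrow> D' \<in> \<D> \<Longrightarrow> h D \<subseteq> h D' \<longleftrightarrow> D \<subseteq> D'"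
    and "fst ` set P \<subseteq> \<D>" "fst ` set Q \<subseteq> \<D>"
  shows "cprec (map (apfst h) P) (map (apfst h) Q) \<longleftrightarrow> cprec P Q"
proof -
  have sub: "h (fst p) \<subseteq> h (fst q) \<longleftrightarrow> fst p \<subseteq> fst q" if "p \<in> set P" "q \<in> set Q" for p q
    using that assms by blast
  have eq: "h (fst p) = h (fst q) \<longleftrightarrow> fst p = fst q" if "p \<in> set P" "q \<in> set Q" for p q
    using sub[OF that] assms(1)[of "fst q" "fst p"] that assms(2,3) by blast
  show ?thesis
    by (simp add: cprec_iff sub eq cong: ball_cong bex_cong)
qed

lemma ordered_partition_zero_part: "ordered_partition {0..<length v} (zero_part v)"
proof -
  have "sorted_wrt block_less (zero_part v)"
    unfolding zero_part_def sorted_wrt_map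
    by (rule sorted_wrt_mono_rel[OF _ sorted_wrt_upt]) (simp add: block_less_def)
  then show ?thesis
    by (auto simp: ordered_partition_def zero_part_def)
qed

lemma Yint_eq:
  "Yint v d = {M. ordered_partition {0..<length v} M \<and> cprec (zero_part v) M \<and> cprec M (one_part v d)}"
proof -
  have "singletons_colored (\<lambda>i. v ! i) (zero_part v)"
    by (auto simp: singletons_colored_def zero_part_def)
  then show ?thesis
    unfolding Yint_def using ordered_partition_zero_part
    by (intro cinterval_eq) (simp_all add: colored_partitions_iff)
qed

definition blocks_union :: "('a set \<times> 'c) list \<Rightarrow> nat set \<Rightarrow> 'a set" where
  "blocks_union s E = (\<Union>i\<in>E. fst (s ! i))"

definition block_indices :: "('a set \<times> 'c) list \<Rightarrow> 'a set \<Rightarrow> nat set" where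
  "block_indices s D = {i. i < length s \<and> fst (s ! i) \<subseteq> D}"

definition expand_partition :: "('a set \<times> 'c) list \<Rightarrow> (nat set \<times> 'c) list \<Rightarrow> ('a set \<times> 'c) list" where
  "expand_partition s M = map (apfst (blocks_union s)) M"

definition index_partition :: "('a set \<times> 'c) list \<Rightarrow> ('a set \<times> 'c) list \<Rightarrow> (nat set \<times> 'c) list" where
  "index_partition s L = map (apfst (block_indices s)) L"

context
  fixes C :: "'a::linorder set" and s :: "('a set \<times> 'c) list"
  assumes s: "ordered_partition C s"
begin

lemma nth_block_nonempty: "i < length s \<Longrightarrow> fst (s ! i) \<noteq> {}"
  using ordered_partitionD(1)[OF s nth_mem] .

lemma block_indices_blocks_union:
  assumes "E \<subseteq> {..<length s}"
  shows "block_indices s (blocks_union s E) = E"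
proof
  show "E \<subseteq> block_indices s (blocks_union s E)"
    using assms by (auto simp: block_indices_def blocks_union_def)
next
  show "block_indices s (blocks_union s E) \<subseteq> E"
  proof
    fix i
    assume "i \<in> block_indices s (blocks_union s E)"
    then have i: "i < length s" "fst (s ! i) \<subseteq> blocks_union s E"
      by (auto simp: block_indices_def)
    obtain x where x: "x \<in> fst (s ! i)"
      using nth_block_nonempty[OF i(1)] by blast
    then obtain j where "j \<in> E" "x \<in> fst (s ! j)"
      using i(2) by (auto simp: blocks_union_def)
    then show "i \<in> E"
      using ordered_partition_nth_eq[OF s i(1), of j x] x assms by auto
  qed
qed

lemma blocks_union_subset_iff:
  assumes "E \<subseteq> {..<length s}" "E' \<subseteq> {..<length s}"
  shows "blocks_union s E \<subseteq> blocks_union s E' \<longleftrightarrow> E \<subseteq> E'"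
proof
  assume "blocks_union s E \<subseteq> blocks_union s E'"
  then have "block_indices s (blocks_union s E) \<subseteq> block_indices s (blocks_union s E')"
    by (auto simp: block_indices_def)
  then show "E \<subseteq> E'"
    using assms by (simp add: block_indices_blocks_union)
qed (auto simp: blocks_union_def)

lemma blocks_union_eq_iff:
  assumes "E \<subseteq> {..<length s}" "E' \<subseteq> {..<length s}"
  shows "blocks_union s E = blocks_union s E' \<longleftrightarrow> E = E'"
  using blocks_union_subset_iff[OF assms] blocks_union_subset_iff[OF assms(2,1)] by blast

lemma blocks_union_all: "blocks_union s {0..<length s} = C"
proof -
  have "set s = (!) s ` {0..<length s}"
    by (metis map_nth set_map set_upt)
  then show ?thesis
    using s by (simp add: blocks_union_def ordered_partition_def image_image)
qed

lemma blocks_union_nonempty_iff: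
  assumes "E \<subseteq> {..<length s}"
  shows "blocks_union s E \<noteq> {} \<longleftrightarrow> E \<noteq> {}"
  using assms nth_block_nonempty by (auto simp: blocks_union_def)

lemma finite_blocks_union:
  assumes "E \<subseteq> {..<length s}"
  shows "finite (blocks_union s E)"
  unfolding blocks_union_def using assms
  by (intro finite_UN_I) (auto intro: finite_subset ordered_partitionD(3)[OF s nth_mem])

lemma blocks_union_less_iff:
  assumes "E \<subseteq> {..<length s}" "E' \<subseteq> {..<length s}"
  shows "(\<forall>x\<in>blocks_union s E. \<forall>y\<in>blocks_union s E'. x < y) \<longleftrightarrow> (\<forall>i\<in>E. \<forall>j\<in>E'. i < j)"
proof
  assume less: "\<forall>x\<in>blocks_union s E. \<forall>y\<in>blocks_union s E'. x < y"
  show "\<forall>i\<in>E. \<forall>j\<in>E'. i < j"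
  proof (intro ballI)
    fix i j
    assume ij: "i \<in> E" "j \<in> E'"
    obtain x y where x: "x \<in> fst (s ! i)" and y: "y \<in> fst (s ! j)"
      using ij assms nth_block_nonempty by (metis equals0I lessThan_iff subsetD)
    then have xy: "x \<in> blocks_union s E" "y \<in> blocks_union s E'"
      using ij by (auto simp: blocks_union_def)
    show "i < j"
    proof (rule ccontr)
      assume "\<not> i < j"
      then consider "j < i" | "i = j" by linarith
      then show False
      proof cases
        case 1
        then have "y < x"
          using ordered_partition_nth_less[OF s 1 _ y x] ij assms by auto
        moreover have "x < y"
          using less xy by blast
        ultimately show False
          by simp
      next
        case 2
        then have "x \<in> blocks_union s E'"
          using x ij by (auto simp: blocks_union_def)
        then show False
          using less xy by auto
      qed
    qed
  qed
next
  assume "\<forall>i\<in>E. \<forall>j\<in>E'. i < j"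
  then show "\<forall>x\<in>blocks_union s E. \<forall>y\<in>blocks_union s E'. x < y"
    using assms ordered_partition_nth_less[OF s] unfolding blocks_union_def by blast
qed

lemma ordered_partition_expand_iff:
  assumes M: "\<forall>p\<in>set M. fst p \<subseteq> {..<length s}"
  shows "ordered_partition C (expand_partition s M) \<longleftrightarrow> ordered_partition {0..<length s} M"
proof -
  have blocks: "finite (blocks_union s (fst p)) \<and> blocks_union s (fst p) \<noteq> {} \<longleftrightarrow>
      finite (fst p) \<and> fst p \<noteq> {}" if "p \<in> set M" for p
    using M that finite_blocks_union blocks_union_nonempty_iff finite_subset[of _ "{..<length s}"]
    by auto
  have "\<Union>(fst ` set (expand_partition s M)) = blocks_union s (\<Union>(fst ` set M))"
    by (auto simp: expand_partition_def blocks_union_def)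
  also have "\<dots> = C \<longleftrightarrow> \<Union>(fst ` set M) = {0..<length s}"
  proof -
    have "\<Union>(fst ` set M) \<subseteq> {..<length s}" "{0..<length s} \<subseteq> {..<length s}"
      using M by auto
    from blocks_union_eq_iff[OF this] show ?thesis
      by (simp add: blocks_union_all)
  qed
  finally have cover: "\<Union>(fst ` set (expand_partition s M)) = C \<longleftrightarrow> \<Union>(fst ` set M) = {0..<length s}" .
  have "sorted_wrt block_less (expand_partition s M) \<longleftrightarrow> sorted_wrt block_less M"
    unfolding expand_partition_def sorted_wrt_map
    using M by (intro sorted_wrt_cong) (simp add: block_less_def blocks_union_less_iff)
  then show ?thesis
    using blocks cover by (auto simp: ordered_partition_def expand_partition_def)
qed

lemma expand_zero_part: "expand_partition s (zero_part (map snd s)) = s"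
  by (rule nth_equalityI) (simp_all add: expand_partition_def zero_part_def blocks_union_def)

lemma expand_one_part: "expand_partition s (one_part (map snd s) d) = [(C, d)]"
  by (simp add: expand_partition_def one_part_def blocks_union_all)

lemma cprec_expand_iff:
  assumes "\<forall>p\<in>set M. fst p \<subseteq> {..<length s}" "\<forall>p\<in>set M'. fst p \<subseteq> {..<length s}"
  shows "cprec (expand_partition s M) (expand_partition s M') \<longleftrightarrow> cprec M M'"
  unfolding expand_partition_def
  by (rule cprec_map_apfst_iff[where \<D> = "Pow {..<length s}"])
    (use assms blocks_union_subset_iff in auto)

lemma index_expand_partition:
  assumes "\<forall>p\<in>set M. fst p \<subseteq> {..<length s}"
  shows "index_partition s (expand_partition s M) = M"
  unfolding index_partition_def expand_partition_def map_map
  by (rule map_idI) (use assms in \<open>auto simp: block_indices_blocks_union\<close>)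

lemma expand_index_partition:
  assumes L: "ordered_partition C L" and "cprec s L"
  shows "expand_partition s (index_partition s L) = L"
proof -
  have "blocks_union s (block_indices s (fst q)) = fst q" if q: "q \<in> set L" for q
  proof
    show "blocks_union s (block_indices s (fst q)) \<subseteq> fst q"
      by (auto simp: blocks_union_def block_indices_def)
  next
    show "fst q \<subseteq> blocks_union s (block_indices s (fst q))"
    proof
      fix x
      assume x: "x \<in> fst q"
      then obtain p where p: "p \<in> set s" "x \<in> fst p"
        using ordered_partitionD(2)[OF L q] ordered_partition_cover[OF s] by blast
      then obtain q' where "q' \<in> set L" "fst p \<subseteq> fst q'"
        using \<open>cprec s L\<close> by (auto simp: cprec_iff)
      then have "fst p \<subseteq> fst q"
        using ordered_partition_block_eq[OF L _ q] p x by blast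
      moreover obtain i where "i < length s" "p = s ! i"
        using p(1) by (auto simp: in_set_conv_nth)
      ultimately show "x \<in> blocks_union s (block_indices s (fst q))"
        using p(2) by (auto simp: blocks_union_def block_indices_def)
    qed
  qed
  then show ?thesis
    unfolding index_partition_def expand_partition_def map_map by (intro map_idI) auto
qed

end

lemma expand_mem_cinterval_iff:
  assumes "finite C" "s \<in> colored_partitions C c" and M: "\<forall>p\<in>set M. fst p \<subseteq> {..<length s}"
  shows "expand_partition s M \<in> cinterval C c s [(C, d)] \<longleftrightarrow> M \<in> Yint (map snd s) d"
proof -
  have s: "ordered_partition C s"
    using assms colored_partitions_iff by blast
  let ?E = "expand_partition s"
  have "?E M \<in> cinterval C c s [(C, d)] \<longleftrightarrow> ordered_partition C (?E M) \<and>
      cprec (?E (zero_part (map snd s))) (?E M) \<and> cprec (?E M) (?E (one_part (map snd s) d))"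
    unfolding cinterval_eq[OF assms(1,2)] expand_zero_part[OF s] expand_one_part[OF s] by simp
  also have "\<dots> \<longleftrightarrow> M \<in> Yint (map snd s) d"
  proof -
    have "\<forall>p\<in>set (zero_part (map snd s)). fst p \<subseteq> {..<length s}"
      "\<forall>p\<in>set (one_part (map snd s) d). fst p \<subseteq> {..<length s}"
      by (auto simp: zero_part_def one_part_def)
    then show ?thesis
      using M by (simp add: Yint_eq cprec_expand_iff[OF s] ordered_partition_expand_iff[OF s])
  qed
  finally show ?thesis .
qed

lemma index_partition_bij:
  assumes "finite C" "s \<in> colored_partitions C c"
  shows "bij_betw (index_partition s) (cinterval C c s [(C, d)]) (Yint (map snd s) d)"
proof (rule bij_betw_byWitness[where f' = "expand_partition s"])
  have s: "ordered_partition C s"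
    using assms colored_partitions_iff by blast
  have indices: "\<forall>p\<in>set (index_partition s L). fst p \<subseteq> {..<length s}" for L
    by (auto simp: index_partition_def block_indices_def)
  have Y_indices: "\<forall>p\<in>set M. fst p \<subseteq> {..<length s}" if "M \<in> Yint (map snd s) d" for M
    using that ordered_partitionD(2) by (fastforce simp: Yint_eq)
  show expand_index: "\<forall>L\<in>cinterval C c s [(C, d)]. expand_partition s (index_partition s L) = L"
    using expand_index_partition[OF s] by (simp add: cinterval_eq[OF assms])
  show "\<forall>M\<in>Yint (map snd s) d. index_partition s (expand_partition s M) = M"
    using index_expand_partition[OF s] Y_indices by blast
  show "index_partition s ` cinterval C c s [(C, d)] \<subseteq> Yint (map snd s) d"
    using expand_mem_cinterval_iff[OF assms indices] expand_index by (metis image_subsetI)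
  show "expand_partition s ` Yint (map snd s) d \<subseteq> cinterval C c s [(C, d)]"
    using expand_mem_cinterval_iff[OF assms] Y_indices by blast
qed

lemma cprec_index_partition_iff:
  assumes "finite C" "s \<in> colored_partitions C c"
    and "L \<in> cinterval C c s [(C, d)]" "L' \<in> cinterval C c s [(C, d)]"
  shows "cprec (index_partition s L) (index_partition s L') \<longleftrightarrow> cprec L L'"
proof -
  have s: "ordered_partition C s"
    using assms colored_partitions_iff by blast
  have "\<forall>p\<in>set (index_partition s L). fst p \<subseteq> {..<length s}" for L
    by (auto simp: index_partition_def block_indices_def)
  then have "cprec (index_partition s L) (index_partition s L') \<longleftrightarrow>
      cprec (expand_partition s (index_partition s L)) (expand_partition s (index_partition s L'))"
    using cprec_expand_iff[OF s] by simp
  also have "\<dots> \<longleftrightarrow> cprec L L'"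
    using assms(3,4) expand_index_partition[OF s] by (simp add: cinterval_eq[OF assms(1,2)])
  finally show ?thesis .
qed

lemma cword_index_partition: "cword (index_partition s L) = cword L"
  by (simp add: cword_def index_partition_def)

section \<open>Restricting to the blocks of a coarser partition\<close>

definition blocks_in :: "'a set \<Rightarrow> ('a set \<times> 'c) list \<Rightarrow> ('a set \<times> 'c) list" where
  "blocks_in C L = filter (\<lambda>p. fst p \<subseteq> C) L"

definition restrictions :: "('a set \<times> 'c) list \<Rightarrow> ('a set \<times> 'c) list \<Rightarrow> ('a set \<times> 'c) list list" where
  "restrictions \<pi> L = map (\<lambda>r. blocks_in (fst r) L) \<pi>"

definition restricted_interval ::
  "('a::linorder \<Rightarrow> 'c) \<Rightarrow> ('a set \<times> 'c) list \<Rightarrow> 'a set \<times> 'c \<Rightarrow> ('a set \<times> 'c) list set" where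
  "restricted_interval c \<sigma> r = cinterval (fst r) c (blocks_in (fst r) \<sigma>) [r]"

lemma ordered_partition_blocks_in:
  assumes L: "ordered_partition S L" and \<pi>: "ordered_partition S \<pi>"
    and refines: "\<forall>p\<in>set L. \<exists>r\<in>set \<pi>. fst p \<subseteq> fst r" and r: "r \<in> set \<pi>"
  shows "ordered_partition (fst r) (blocks_in (fst r) L)"
proof -
  have "fst r \<subseteq> \<Union>(fst ` set (blocks_in (fst r) L))"
  proof
    fix x
    assume x: "x \<in> fst r"
    then obtain p where p: "p \<in> set L" "x \<in> fst p"
      using ordered_partitionD(2)[OF \<pi> r] ordered_partition_cover[OF L] by blast
    then obtain r' where "r' \<in> set \<pi>" "fst p \<subseteq> fst r'"
      using refines by blast
    then have "fst p \<subseteq> fst r"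
      using ordered_partition_block_eq[OF \<pi> _ r] p x by blast
    then have "p \<in> set (blocks_in (fst r) L)"
      using p by (simp add: blocks_in_def)
    then show "x \<in> \<Union>(fst ` set (blocks_in (fst r) L))"
      using p by blast
  qed
  then show ?thesis
    using L by (auto simp: ordered_partition_def blocks_in_def sorted_wrt_filter)
qed

lemma blocks_in_self:
  assumes \<pi>: "ordered_partition S \<pi>" and r: "r \<in> set \<pi>"
  shows "blocks_in (fst r) \<pi> = [r]"
proof (rule sorted_block_lists_eq)
  show "set (blocks_in (fst r) \<pi>) = set [r]"
    using r ordered_partitionD(1)[OF \<pi>] ordered_partition_block_eq[OF \<pi> _ r]
    by (fastforce simp: blocks_in_def)
qed (use \<pi> in \<open>auto simp: blocks_in_def ordered_partition_def sorted_wrt_filter\<close>)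

lemma cprec_iff_blocks_in:
  assumes \<pi>: "ordered_partition S \<pi>"
    and L: "\<forall>p\<in>set L. fst p \<noteq> {} \<and> (\<exists>r\<in>set \<pi>. fst p \<subseteq> fst r)"
    and M: "\<forall>q\<in>set M. \<exists>r\<in>set \<pi>. fst q \<subseteq> fst r"
  shows "cprec L M \<longleftrightarrow> (\<forall>r\<in>set \<pi>. cprec (blocks_in (fst r) L) (blocks_in (fst r) M))"
proof
  assume LM: "cprec L M"
  show "\<forall>r\<in>set \<pi>. cprec (blocks_in (fst r) L) (blocks_in (fst r) M)"
  proof
    fix r
    assume r: "r \<in> set \<pi>"
    have "\<exists>q\<in>set (blocks_in (fst r) M). fst p \<subseteq> fst q" if p: "p \<in> set L" "fst p \<subseteq> fst r" for p
    proof -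
      obtain q where q: "q \<in> set M" "fst p \<subseteq> fst q"
        using LM p by (auto simp: cprec_iff)
      obtain r' where r': "r' \<in> set \<pi>" "fst q \<subseteq> fst r'"
        using M q by blast
      obtain x where "x \<in> fst p"
        using L p by blast
      then have "r' = r"
        using ordered_partition_block_eq[OF \<pi> r'(1) r] p q r' by blast
      then have "q \<in> set (blocks_in (fst r) M)"
        using q r' by (simp add: blocks_in_def)
      then show ?thesis
        using q by blast
    qed
    then show "cprec (blocks_in (fst r) L) (blocks_in (fst r) M)"
      using LM by (simp add: cprec_iff blocks_in_def)
  qed
next
  assume local: "\<forall>r\<in>set \<pi>. cprec (blocks_in (fst r) L) (blocks_in (fst r) M)"
  show "cprec L M"
    unfolding cprec_iff
  proof (intro conjI ballI impI)
    fix p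
    assume p: "p \<in> set L"
    then obtain r where r: "r \<in> set \<pi>" "fst p \<subseteq> fst r"
      using L by blast
    then have "p \<in> set (blocks_in (fst r) L)"
      using p by (simp add: blocks_in_def)
    then obtain q where "q \<in> set (blocks_in (fst r) M)" "fst p \<subseteq> fst q"
      using local r(1) unfolding cprec_iff by blast
    then show "\<exists>q\<in>set M. fst p \<subseteq> fst q"
      by (auto simp: blocks_in_def)
  next
    fix p q
    assume pq: "p \<in> set L" "q \<in> set M" "fst p = fst q"
    obtain r where r: "r \<in> set \<pi>" "fst p \<subseteq> fst r"
      using L pq(1) by blast
    then have "p \<in> set (blocks_in (fst r) L)" "q \<in> set (blocks_in (fst r) M)"
      using pq by (simp_all add: blocks_in_def)
    then show "snd p = snd q"
      using local r(1) pq(3) unfolding cprec_iff by blast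
  qed
qed

lemma cprec_iff_restrictions:
  assumes "ordered_partition S \<pi>"
    and "\<forall>p\<in>set L. fst p \<noteq> {} \<and> (\<exists>r\<in>set \<pi>. fst p \<subseteq> fst r)"
    and "\<forall>q\<in>set M. \<exists>r\<in>set \<pi>. fst q \<subseteq> fst r"
  shows "cprec L M \<longleftrightarrow> list_all2 cprec (restrictions \<pi> L) (restrictions \<pi> M)"
  using cprec_iff_blocks_in[OF assms]
  by (simp add: restrictions_def list_all2_map1 list_all2_map2 list_all2_same)

context
  fixes S :: "'a::linorder set" and \<pi> :: "('a set \<times> 'c) list" and Ls :: "('a set \<times> 'c) list list"
  assumes \<pi>: "ordered_partition S \<pi>" and length_Ls: "length Ls = length \<pi>"
    and pieces: "\<And>k. k < length \<pi> \<Longrightarrow> ordered_partition (fst (\<pi> ! k)) (Ls ! k)"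
begin

lemma set_concat_pieces: "p \<in> set (concat Ls) \<longleftrightarrow> (\<exists>k<length \<pi>. p \<in> set (Ls ! k))"
proof
  assume "p \<in> set (concat Ls)"
  then obtain xs where "xs \<in> set Ls" "p \<in> set xs"
    by auto
  then show "\<exists>k<length \<pi>. p \<in> set (Ls ! k)"
    using length_Ls by (metis in_set_conv_nth)
next
  assume "\<exists>k<length \<pi>. p \<in> set (Ls ! k)"
  then show "p \<in> set (concat Ls)"
    using length_Ls by (auto intro: nth_mem)
qed

lemma ordered_partition_concat: "ordered_partition S (concat Ls)"
proof -
  have "sorted_wrt (\<lambda>xs ys. \<forall>x\<in>set xs. \<forall>y\<in>set ys. block_less x y) Ls"
    unfolding sorted_wrt_iff_nth_less
  proof (intro allI impI ballI)
    fix i j p q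
    assume ij: "i < j" "j < length Ls" and pq: "p \<in> set (Ls ! i)" "q \<in> set (Ls ! j)"
    then have "fst p \<subseteq> fst (\<pi> ! i)" "fst q \<subseteq> fst (\<pi> ! j)"
      using pieces length_Ls ordered_partitionD(2) by (metis order.strict_trans)+
    then show "block_less p q"
      using ordered_partition_nth_less[OF \<pi> ij(1)] ij(2) length_Ls
      by (auto simp: block_less_def)
  qed
  moreover have "\<Union>(fst ` set (concat Ls)) = S"
  proof -
    have "\<Union>(fst ` set (concat Ls)) = (\<Union>k<length \<pi>. \<Union>(fst ` set (Ls ! k)))"
      using set_concat_pieces by blast
    also have "\<dots> = (\<Union>k<length \<pi>. fst (\<pi> ! k))"
      using pieces by (simp add: ordered_partition_def)
    also have "\<dots> = \<Union>(fst ` set \<pi>)"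
      by (metis image_image lessThan_atLeast0 map_nth set_map set_upt)
    also have "\<dots> = S"
      using \<pi> by (simp add: ordered_partition_def)
    finally show ?thesis .
  qed
  moreover have "finite (fst p) \<and> fst p \<noteq> {}" if "p \<in> set (concat Ls)" for p
    using that set_concat_pieces pieces ordered_partitionD(1,3) by blast
  moreover have "sorted_wrt block_less xs" if "xs \<in> set Ls" for xs
    using that pieces length_Ls by (auto simp: ordered_partition_def in_set_conv_nth)
  ultimately show ?thesis
    by (simp add: ordered_partition_def sorted_wrt_concat)
qed

lemma blocks_in_concat:
  assumes k: "k < length \<pi>"
  shows "blocks_in (fst (\<pi> ! k)) (concat Ls) = Ls ! k"
proof (rule sorted_block_lists_eq)
  show "set (blocks_in (fst (\<pi> ! k)) (concat Ls)) = set (Ls ! k)"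
  proof (intro set_eqI iffI)
    fix p
    assume "p \<in> set (blocks_in (fst (\<pi> ! k)) (concat Ls))"
    then obtain j where j: "j < length \<pi>" "p \<in> set (Ls ! j)" and sub: "fst p \<subseteq> fst (\<pi> ! k)"
      using set_concat_pieces by (auto simp: blocks_in_def)
    obtain x where "x \<in> fst p"
      using ordered_partitionD(1)[OF pieces[OF j(1)] j(2)] by blast
    then have "j = k"
      using ordered_partition_nth_eq[OF \<pi> j(1) k] ordered_partitionD(2)[OF pieces[OF j(1)] j(2)] sub
      by blast
    then show "p \<in> set (Ls ! k)"
      using j by simp
  next
    fix p
    assume "p \<in> set (Ls ! k)"
    then show "p \<in> set (blocks_in (fst (\<pi> ! k)) (concat Ls))"
      using set_concat_pieces k ordered_partitionD(2)[OF pieces[OF k]] by (auto simp: blocks_in_def)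
  qed
qed (use ordered_partition_concat pieces[OF k] ordered_partitionD(1)[OF ordered_partition_concat] in
      \<open>auto simp: ordered_partition_def blocks_in_def sorted_wrt_filter\<close>)

end

lemma concat_restrictions:
  assumes L: "ordered_partition S L" and \<pi>: "ordered_partition S \<pi>"
    and refines: "\<forall>p\<in>set L. \<exists>r\<in>set \<pi>. fst p \<subseteq> fst r"
  shows "concat (restrictions \<pi> L) = L"
proof -
  have "ordered_partition (fst (\<pi> ! k)) (restrictions \<pi> L ! k)" if "k < length \<pi>" for k
    using ordered_partition_blocks_in[OF L \<pi> refines] that by (simp add: restrictions_def)
  then have "ordered_partition S (concat (restrictions \<pi> L))"
    using ordered_partition_concat[OF \<pi>] by (simp add: restrictions_def)
  moreover have "set (concat (restrictions \<pi> L)) = set L"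
    using refines by (auto simp: restrictions_def blocks_in_def)
  ultimately show ?thesis
    using L by (intro sorted_block_lists_eq) (auto simp: ordered_partition_def)
qed

lemma cword_concat: "cword (concat Ls) = concat (map cword Ls)"
  by (induction Ls) (simp_all add: cword_def)

definition coordinates ::
  "('a set \<times> 'c) list \<Rightarrow> ('a set \<times> 'c) list \<Rightarrow> ('a set \<times> 'c) list \<Rightarrow> (nat set \<times> 'c) list list" where
  "coordinates \<sigma> \<pi> L =
     map (\<lambda>k. index_partition (blocks_in (fst (\<pi> ! k)) \<sigma>) (restrictions \<pi> L ! k)) [0..<length \<pi>]"

context
  fixes S :: "'a::linorder set" and c :: "'a \<Rightarrow> 'c" and \<sigma> \<pi> :: "('a set \<times> 'c) list"
  assumes S: "finite S" and \<sigma>: "\<sigma> \<in> colored_partitions S c" and \<pi>: "\<pi> \<in> colored_partitions S c"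
    and \<sigma>_\<pi>: "cprec \<sigma> \<pi>"
begin

lemma ordered_partition_\<sigma>: "ordered_partition S \<sigma>" and ordered_partition_\<pi>: "ordered_partition S \<pi>"
  using S \<sigma> \<pi> by (simp_all add: colored_partitions_iff)

lemma blocks_refine_\<pi>:
  assumes "ordered_partition S L" "cprec L \<pi>"
  shows "\<forall>p\<in>set L. fst p \<noteq> {} \<and> (\<exists>r\<in>set \<pi>. fst p \<subseteq> fst r)"
  using assms(2) ordered_partitionD(1)[OF assms(1)] by (auto simp: cprec_iff)

lemma finite_block: "r \<in> set \<pi> \<Longrightarrow> finite (fst r)"
  using ordered_partitionD(3)[OF ordered_partition_\<pi>] .

lemma blocks_in_\<sigma>_mem_colored_partitions:
  assumes r: "r \<in> set \<pi>"
  shows "blocks_in (fst r) \<sigma> \<in> colored_partitions (fst r) c"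
proof -
  have "ordered_partition (fst r) (blocks_in (fst r) \<sigma>)"
    using ordered_partition_blocks_in[OF ordered_partition_\<sigma> ordered_partition_\<pi> _ r] \<sigma>_\<pi>
    by (simp add: cprec_iff)
  moreover have "singletons_colored c (blocks_in (fst r) \<sigma>)"
    using \<sigma> S by (auto simp: colored_partitions_iff singletons_colored_def blocks_in_def)
  ultimately show ?thesis
    using finite_block[OF r] by (simp add: colored_partitions_iff)
qed

lemma restricted_interval_eq:
  assumes r: "r \<in> set \<pi>"
  shows "restricted_interval c \<sigma> r =
    {L. ordered_partition (fst r) L \<and> cprec (blocks_in (fst r) \<sigma>) L \<and> cprec L [r]}"
  unfolding restricted_interval_def
  by (rule cinterval_eq[OF finite_block[OF r] blocks_in_\<sigma>_mem_colored_partitions[OF r]])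

lemma blocks_in_mem_restricted_interval:
  assumes L: "L \<in> cinterval S c \<sigma> \<pi>" and r: "r \<in> set \<pi>"
  shows "blocks_in (fst r) L \<in> restricted_interval c \<sigma> r"
proof -
  have L_part: "ordered_partition S L" and "cprec \<sigma> L" "cprec L \<pi>"
    using L by (simp_all add: cinterval_eq[OF S \<sigma>])
  have "cprec (blocks_in (fst r) \<sigma>) (blocks_in (fst r) L)"
    using \<open>cprec \<sigma> L\<close> cprec_iff_blocks_in[OF ordered_partition_\<pi>] r
      blocks_refine_\<pi>[OF ordered_partition_\<sigma> \<sigma>_\<pi>] blocks_refine_\<pi>[OF L_part \<open>cprec L \<pi>\<close>] by blast
  moreover have "cprec (blocks_in (fst r) L) [r]"
    using \<open>cprec L \<pi>\<close> cprec_iff_blocks_in[OF ordered_partition_\<pi>] r blocks_in_self[OF ordered_partition_\<pi> r]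
      blocks_refine_\<pi>[OF L_part \<open>cprec L \<pi>\<close>] by (metis order_refl)
  moreover have "ordered_partition (fst r) (blocks_in (fst r) L)"
    using ordered_partition_blocks_in[OF L_part ordered_partition_\<pi> _ r] blocks_refine_\<pi>[OF L_part \<open>cprec L \<pi>\<close>]
    by blast
  ultimately show ?thesis
    by (simp add: restricted_interval_eq[OF r])
qed

lemma concat_mem_cinterval:
  assumes Ls: "Ls \<in> list_product (\<lambda>k. restricted_interval c \<sigma> (\<pi> ! k)) (length \<pi>)"
  shows "restrictions \<pi> (concat Ls) = Ls" "concat Ls \<in> cinterval S c \<sigma> \<pi>"
proof -
  have length_Ls: "length Ls = length \<pi>"
    using Ls by (simp add: list_product_def)
  have local: "ordered_partition (fst (\<pi> ! k)) (Ls ! k)" "cprec (blocks_in (fst (\<pi> ! k)) \<sigma>) (Ls ! k)"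
      "cprec (Ls ! k) [\<pi> ! k]" if "k < length \<pi>" for k
    using that Ls by (simp_all add: list_product_def restricted_interval_eq)
  have blocks: "blocks_in (fst (\<pi> ! k)) (concat Ls) = Ls ! k" if "k < length \<pi>" for k
    using blocks_in_concat[OF ordered_partition_\<pi> length_Ls local(1) that] .
  then show "restrictions \<pi> (concat Ls) = Ls"
    using length_Ls by (intro nth_equalityI) (simp_all add: restrictions_def)
  have part: "ordered_partition S (concat Ls)"
    using ordered_partition_concat[OF ordered_partition_\<pi> length_Ls local(1)] .
  have refines: "\<forall>p\<in>set (concat Ls). fst p \<noteq> {} \<and> (\<exists>r\<in>set \<pi>. fst p \<subseteq> fst r)"
    using set_concat_pieces[OF ordered_partition_\<pi> length_Ls local(1)] local(1) ordered_partitionD(1,2)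
    by (meson nth_mem)
  have below: "cprec \<sigma> (concat Ls)"
    using cprec_iff_restrictions[OF ordered_partition_\<pi> blocks_refine_\<pi>[OF ordered_partition_\<sigma> \<sigma>_\<pi>]] refines
      local(2) length_Ls blocks by (simp add: list_all2_conv_all_nth restrictions_def)
  have "cprec (concat Ls) \<pi> \<longleftrightarrow> (\<forall>k<length \<pi>. cprec (Ls ! k) [\<pi> ! k])"
    using cprec_iff_restrictions[OF ordered_partition_\<pi> refines, of \<pi>] length_Ls blocks
      blocks_in_self[OF ordered_partition_\<pi> nth_mem] by (auto simp: list_all2_conv_all_nth restrictions_def)
  then have above: "cprec (concat Ls) \<pi>"
    using local(3) by blast
  show "concat Ls \<in> cinterval S c \<sigma> \<pi>"
    using part below above by (simp add: cinterval_eq[OF S \<sigma>])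
qed

lemma concat_restrictions_cinterval:
  assumes "L \<in> cinterval S c \<sigma> \<pi>"
  shows "concat (restrictions \<pi> L) = L"
  using assms concat_restrictions[OF _ ordered_partition_\<pi>] by (simp add: cinterval_eq[OF S \<sigma>] cprec_iff)

lemma restrictions_mem_list_product:
  assumes "L \<in> cinterval S c \<sigma> \<pi>"
  shows "restrictions \<pi> L \<in>
    list_product (\<lambda>k. restricted_interval c \<sigma> (\<pi> ! k)) (length \<pi>)"
  using assms by (auto simp: list_product_def restrictions_def intro!: blocks_in_mem_restricted_interval)

lemma restrictions_bij:
  "bij_betw (restrictions \<pi>) (cinterval S c \<sigma> \<pi>)
    (list_product (\<lambda>k. restricted_interval c \<sigma> (\<pi> ! k)) (length \<pi>))"
  by (rule bij_betw_byWitness[where f' = concat])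
    (use concat_restrictions_cinterval restrictions_mem_list_product concat_mem_cinterval in auto)

lemma cprec_restrictions_iff:
  assumes "L \<in> cinterval S c \<sigma> \<pi>" "M \<in> cinterval S c \<sigma> \<pi>"
  shows "cprec L M \<longleftrightarrow> list_all2 cprec (restrictions \<pi> L) (restrictions \<pi> M)"
proof -
  have "ordered_partition S L" "cprec L \<pi>" "ordered_partition S M" "cprec M \<pi>"
    using assms by (simp_all add: cinterval_eq[OF S \<sigma>])
  from blocks_refine_\<pi>[OF this(1,2)] blocks_refine_\<pi>[OF this(3,4)] show ?thesis
    by (intro cprec_iff_restrictions[OF ordered_partition_\<pi>]) blast+
qed

lemma index_partition_restricted_bij:
  assumes "k < length \<pi>"
  shows "bij_betw (index_partition (blocks_in (fst (\<pi> ! k)) \<sigma>)) (restricted_interval c \<sigma> (\<pi> ! k))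
    (Yint (map snd (blocks_in (fst (\<pi> ! k)) \<sigma>)) (snd (\<pi> ! k)))"
proof -
  have r: "\<pi> ! k \<in> set \<pi>"
    using assms by simp
  from index_partition_bij[OF finite_block[OF r] blocks_in_\<sigma>_mem_colored_partitions[OF r],
      where d = "snd (\<pi> ! k)"]
  show ?thesis
    by (simp add: restricted_interval_def)
qed

lemma cprec_index_partition_restricted_iff:
  assumes "k < length \<pi>"
    and "L \<in> restricted_interval c \<sigma> (\<pi> ! k)" "M \<in> restricted_interval c \<sigma> (\<pi> ! k)"
  shows "cprec (index_partition (blocks_in (fst (\<pi> ! k)) \<sigma>) L)
      (index_partition (blocks_in (fst (\<pi> ! k)) \<sigma>) M) \<longleftrightarrow> cprec L M"
proof -
  have r: "\<pi> ! k \<in> set \<pi>"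
    using assms by simp
  from cprec_index_partition_iff[OF finite_block[OF r] blocks_in_\<sigma>_mem_colored_partitions[OF r],
      where d = "snd (\<pi> ! k)"]
  show ?thesis
    using assms(2,3) by (simp add: restricted_interval_def)
qed

lemma coordinates_bij: "bij_betw (coordinates \<sigma> \<pi>) (cinterval S c \<sigma> \<pi>) (Yprod \<sigma> \<pi>)"
proof -
  have "Yprod \<sigma> \<pi> =
      list_product (\<lambda>k. Yint (map snd (blocks_in (fst (\<pi> ! k)) \<sigma>)) (snd (\<pi> ! k))) (length \<pi>)"
    by (simp add: Yprod_def list_product_def restr_word_def blocks_in_def case_prod_unfold)
  moreover have "coordinates \<sigma> \<pi> =
      (\<lambda>Ls. map (\<lambda>k. index_partition (blocks_in (fst (\<pi> ! k)) \<sigma>) (Ls ! k)) [0..<length \<pi>])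
        \<circ> restrictions \<pi>"
    by (simp add: fun_eq_iff coordinates_def)
  ultimately show ?thesis
    using bij_betw_trans[OF restrictions_bij bij_betw_list_product[OF index_partition_restricted_bij]]
    by simp
qed

lemma cprec_coordinates_iff:
  assumes "L \<in> cinterval S c \<sigma> \<pi>" "M \<in> cinterval S c \<sigma> \<pi>"
  shows "cprec L M \<longleftrightarrow> list_all2 cprec (coordinates \<sigma> \<pi> L) (coordinates \<sigma> \<pi> M)"
proof -
  have "list_all2 cprec (coordinates \<sigma> \<pi> L) (coordinates \<sigma> \<pi> M) \<longleftrightarrow>
      list_all2 cprec (restrictions \<pi> L) (restrictions \<pi> M)"
    unfolding coordinates_def
    using restrictions_mem_list_product[OF assms(1)] restrictions_mem_list_product[OF assms(2)]
      cprec_index_partition_restricted_iff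
    by (rule list_all2_map_nth_iff[where f = "\<lambda>k. index_partition (blocks_in (fst (\<pi> ! k)) \<sigma>)"])
  then show ?thesis
    using cprec_restrictions_iff[OF assms] by simp
qed

lemma cword_coordinates:
  assumes "L \<in> cinterval S c \<sigma> \<pi>"
  shows "cword L = concat (map cword (coordinates \<sigma> \<pi> L))"
proof -
  have "cword L = cword (concat (restrictions \<pi> L))"
    using concat_restrictions_cinterval[OF assms] by simp
  also have "\<dots> = concat (map cword (restrictions \<pi> L))"
    by (rule cword_concat)
  also have "map cword (restrictions \<pi> L) = map cword (coordinates \<sigma> \<pi> L)"
    by (rule nth_equalityI) (simp_all add: coordinates_def restrictions_def cword_index_partition)
  finally show ?thesis .
qed

end

theorem lemma1:
  fixes S :: "'a::linorder set" and c :: "'a \<Rightarrow> 'c"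
    and \<sigma> \<pi> :: "('a set \<times> 'c) list"
  assumes "finite (UNIV :: 'c set)" and "finite S"
    and "\<sigma> \<in> colored_partitions S c" and "\<pi> \<in> colored_partitions S c"
    and "cprec \<sigma> \<pi>"
  shows "\<exists>\<theta>. bij_betw \<theta> (cinterval S c \<sigma> \<pi>) (Yprod \<sigma> \<pi>) \<and>
           (\<forall>L \<in> cinterval S c \<sigma> \<pi>. \<forall>M \<in> cinterval S c \<sigma> \<pi>.
              cprec L M \<longleftrightarrow> list_all2 cprec (\<theta> L) (\<theta> M)) \<and>
           (\<forall>L \<in> cinterval S c \<sigma> \<pi>. cword L = concat (map cword (\<theta> L)))"
  using coordinates_bij[OF assms(2-5)] cprec_coordinates_iff[OF assms(2-5)] cword_coordinates[OF assms(2-5)]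
  by blast

end
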